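(* Let $m\ge 1$ and let $G,\Sigma\in C^2(\mathbb{R}^m)$. Then $$(\Xi+\nabla_\tau G(\tau))\cdot(\tau+\nabla_\Xi\Sigma(\Xi))\ \ge\ 0\qquad\text{for all }(\Xi,\tau)\in\mathbb{R}^m\times\mathbb{R}^m$$ holds if and only if all three of the following hold: (i) for every $(\Xi,\tau)\in\mathbb{R}^m\times\mathbb{R}^m$: $\Xi+\nabla_\tau G(\tau)=0$ if and only if $\tau+\nabla_\Xi\Sigma(\Xi)=0$; (ii) $G$ is convex; (iii) $\Sigma$ is convex.
   Context: $\nabla_\tau G$ denotes the gradient of $G$ with respect to its argument $\tau\in\mathbb{R}^m$, and $\nabla_\Xi\Sigma$ the gradient of $\Sigma$ with respect to its argument $\Xi\in\mathbb{R}^m$; the dot denotes the Euclidean inner product on $\mathbb{R}^m$. *)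

theory Defs
  imports "HOL-Analysis.Analysis"
begin

text \<open>Gradient of a scalar function on R^n: the vector of the Frechet derivative
  applied to the standard basis vectors, so that for differentiable f,
  Df(x) h = grad f x \<bullet> h.\<close>
definition grad :: "(real^'n \<Rightarrow> real) \<Rightarrow> real^'n \<Rightarrow> real^'n" where
  "grad f x = (\<chi> i. frechet_derivative f (at x) (axis i 1))"

definition C2 :: "(real^'n \<Rightarrow> real) \<Rightarrow> bool" where
  "C2 f \<longleftrightarrow> (\<forall>x. f differentiable (at x)) \<and>
            (\<forall>x. grad f differentiable (at x)) \<and>
            continuous_on UNIV (\<lambda>x. matrix (frechet_derivative (grad f) (at x)))"

end

theory Submission
  imports Defs
begin

text \<open>Write \<open>P(\<Xi>, \<tau>) = (\<Xi> + \<nabla>G \<tau>) \<bullet> (\<tau> + \<nabla>\<Sigma> \<Xi>)\<close>. If \<open>P \<ge> 0\<close>, then fixing \<open>\<Xi>\<close> and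
  letting \<open>\<tau>\<close> approach \<open>-\<nabla>\<Sigma> \<Xi>\<close> from the direction \<open>-(\<Xi> + \<nabla>G(-\<nabla>\<Sigma> \<Xi>))\<close> forces
  \<open>\<nabla>G(-\<nabla>\<Sigma> \<Xi>) = -\<Xi>\<close> by continuity; symmetrically \<open>\<nabla>\<Sigma>(-\<nabla>G \<tau>) = -\<tau>\<close>. So \<open>-\<nabla>G\<close> and
  \<open>-\<nabla>\<Sigma>\<close> are mutually inverse, which gives (i), and substituting \<open>\<Xi> = -\<nabla>G y\<close> turns
  \<open>P(\<Xi>, x) \<ge> 0\<close> into monotonicity \<open>(\<nabla>G x - \<nabla>G y) \<bullet> (x - y) \<ge> 0\<close> of the gradient, which
  is convexity of \<open>G\<close>. Conversely, with \<open>a = -\<nabla>\<Sigma> \<Xi>\<close> condition (i) gives \<open>\<nabla>G a = -\<Xi>\<close>,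
  so \<open>P(\<Xi>, \<tau>) = (\<nabla>G \<tau> - \<nabla>G a) \<bullet> (\<tau> - a)\<close>, which is nonnegative by convexity.\<close>

definition monotone_operator :: "('a::real_inner \<Rightarrow> 'a) \<Rightarrow> bool" where
  "monotone_operator g \<longleftrightarrow> (\<forall>x y. 0 \<le> (g x - g y) \<bullet> (x - y))"

lemma linear_eq_inner_axis:
  fixes L :: "real^'n \<Rightarrow> real"
  assumes "linear L"
  shows "L h = (\<chi> i. L (axis i 1)) \<bullet> h"
proof -
  have "L h = L (\<Sum>i\<in>UNIV. h$i *\<^sub>R axis i 1)"
    using basis_expansion[of h] by (simp add: scalar_mult_eq_scaleR)
  also have "\<dots> = (\<Sum>i\<in>UNIV. h$i * L (axis i 1))"
    using assms by (simp add: linear_sum linear_scale)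
  also have "\<dots> = (\<chi> i. L (axis i 1)) \<bullet> h"
    by (simp add: inner_vec_def mult.commute)
  finally show ?thesis .
qed

lemma has_derivative_grad:
  fixes f :: "real^'n \<Rightarrow> real"
  assumes "f differentiable (at x)"
  shows "(f has_derivative (\<lambda>h. grad f x \<bullet> h)) (at x)"
proof -
  have D: "(f has_derivative frechet_derivative f (at x)) (at x)"
    using assms frechet_derivative_works by blast
  then have "frechet_derivative f (at x) = (\<lambda>h. grad f x \<bullet> h)"
    unfolding grad_def by (intro ext linear_eq_inner_axis has_derivative_linear)
  with D show ?thesis by simp
qed

lemma C2_imp_continuous_grad:
  assumes "C2 f"
  shows "continuous_on UNIV (grad f)"
proof (rule continuous_at_imp_continuous_on, rule ballI)
  fix x
  have "grad f differentiable (at x)" using assms by (simp add: C2_def)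
  then show "isCont (grad f) x" by (rule differentiable_imp_continuous_within)
qed

lemma has_real_derivative_along_line:
  fixes f :: "'a::real_inner \<Rightarrow> real"
  assumes "\<And>x. (f has_derivative (\<lambda>h. g x \<bullet> h)) (at x)"
  shows "((\<lambda>t. f (a + t *\<^sub>R d)) has_real_derivative (g (a + t *\<^sub>R d) \<bullet> d)) (at t)"
proof -
  have "((\<lambda>t. a + t *\<^sub>R d) has_derivative (\<lambda>h. h *\<^sub>R d)) (at t)"
    by (auto intro!: derivative_eq_intros)
  from has_derivative_compose[OF this assms]
  have "((\<lambda>t. f (a + t *\<^sub>R d)) has_derivative (\<lambda>h. g (a + t *\<^sub>R d) \<bullet> (h *\<^sub>R d))) (at t)"
    by (simp add: o_def)
  then show ?thesis
    unfolding has_field_derivative_def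
    by (rule has_derivative_eq_rhs) (simp add: fun_eq_iff mult.commute)
qed

lemma convex_on_restrict_line:
  fixes f :: "'a::real_vector \<Rightarrow> real"
  assumes "convex_on UNIV f"
  shows "convex_on UNIV (\<lambda>t. f (a + t *\<^sub>R d))"
proof (rule convex_onI)
  fix s t u :: real
  assume u: "0 < u" "u < 1"
  have "a + ((1 - u) * s + u * t) *\<^sub>R d = (1 - u) *\<^sub>R (a + s *\<^sub>R d) + u *\<^sub>R (a + t *\<^sub>R d)"
    by (simp add: algebra_simps)
  then show "f (a + ((1 - u) *\<^sub>R s + u *\<^sub>R t) *\<^sub>R d)
      \<le> (1 - u) * f (a + s *\<^sub>R d) + u * f (a + t *\<^sub>R d)"
    using convex_onD[OF assms, of u] u by simp
qed simp

lemma convex_on_if_restrict_lines: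
  fixes f :: "'a::real_vector \<Rightarrow> real"
  assumes "\<And>a d. convex_on UNIV (\<lambda>t. f (a + t *\<^sub>R d))"
  shows "convex_on UNIV f"
proof (rule convex_onI)
  fix x y :: 'a and u :: real
  assume "0 < u" "u < 1"
  then have "f (x + ((1 - u) *\<^sub>R 0 + u *\<^sub>R 1) *\<^sub>R (y - x)) \<le> (1 - u) * f (x + 0 *\<^sub>R (y - x)) + u * f (x + 1 *\<^sub>R (y - x))"
    by (intro convex_onD[OF assms]) auto
  moreover have "x + u *\<^sub>R (y - x) = (1 - u) *\<^sub>R x + u *\<^sub>R y"
    by (simp add: algebra_simps)
  ultimately show "f ((1 - u) *\<^sub>R x + u *\<^sub>R y) \<le> (1 - u) * f x + u * f y"
    by simp
qed simp

lemma convex_on_if_monotone_gradient: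
  fixes f :: "'a::real_inner \<Rightarrow> real"
  assumes deriv: "\<And>x. (f has_derivative (\<lambda>h. g x \<bullet> h)) (at x)"
    and mono: "monotone_operator g"
  shows "convex_on UNIV f"
proof (rule convex_on_if_restrict_lines, rule convex_on_realI)
  fix a d :: 'a and s t :: real
  show "((\<lambda>t. f (a + t *\<^sub>R d)) has_real_derivative (g (a + t *\<^sub>R d) \<bullet> d)) (at t)"
    using has_real_derivative_along_line[OF deriv] .
  assume "s \<le> t"
  have "0 \<le> (g (a + t *\<^sub>R d) - g (a + s *\<^sub>R d)) \<bullet> ((a + t *\<^sub>R d) - (a + s *\<^sub>R d))"
    using mono unfolding monotone_operator_def by blast
  also have "\<dots> = (t - s) * (g (a + t *\<^sub>R d) \<bullet> d - g (a + s *\<^sub>R d) \<bullet> d)"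
    by (simp add: algebra_simps inner_diff_left)
  finally show "g (a + s *\<^sub>R d) \<bullet> d \<le> g (a + t *\<^sub>R d) \<bullet> d"
    using \<open>s \<le> t\<close> by (cases "s = t") (auto simp: zero_le_mult_iff)
qed simp

lemma convex_on_imp_above_gradient:
  fixes f :: "'a::real_inner \<Rightarrow> real"
  assumes deriv: "\<And>x. (f has_derivative (\<lambda>h. g x \<bullet> h)) (at x)"
    and "convex_on UNIV f"
  shows "f y - f x \<ge> g x \<bullet> (y - x)"
proof -
  have "f (x + 1 *\<^sub>R (y - x)) - f (x + 0 *\<^sub>R (y - x)) \<ge> (g (x + 0 *\<^sub>R (y - x)) \<bullet> (y - x)) * (1 - 0)"
    by (rule convex_on_imp_above_tangent[OF convex_on_restrict_line[OF assms(2)]])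
      (use has_real_derivative_along_line[OF deriv, of x "y - x" 0] in auto)
  then show ?thesis by simp
qed

lemma convex_on_iff_monotone_gradient:
  fixes f :: "'a::real_inner \<Rightarrow> real"
  assumes deriv: "\<And>x. (f has_derivative (\<lambda>h. g x \<bullet> h)) (at x)"
  shows "convex_on UNIV f \<longleftrightarrow> monotone_operator g"
proof
  assume "convex_on UNIV f"
  note above = convex_on_imp_above_gradient[OF deriv this]
  have "0 \<le> (g x - g y) \<bullet> (x - y)" for x y
    using above[of y x] above[of x y] by (simp add: inner_diff_left inner_diff_right)
  then show "monotone_operator g"
    unfolding monotone_operator_def by blast
qed (rule convex_on_if_monotone_gradient[OF deriv])

lemma inner_nonneg_imp_zero_at:
  fixes g :: "'a::real_inner \<Rightarrow> 'a"
  assumes "continuous_on UNIV g" and nonneg: "\<And>\<tau>. 0 \<le> (p + g \<tau>) \<bullet> (\<tau> + c)"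
  shows "p + g (-c) = 0"
proof -
  define w where "w = p + g (-c)"
  define k where "k = (\<lambda>t::real. (p + g (-c - t *\<^sub>R w)) \<bullet> w)"
  have "continuous_on UNIV k"
    unfolding k_def
    by (intro continuous_intros continuous_on_compose2[OF assms(1)]) auto
  then have "(k \<longlongrightarrow> k 0) (at 0 within {0<..})"
    by (simp add: continuous_on_eq_continuous_at continuous_at_imp_continuous_at_within
        flip: continuous_within)
  moreover have "k t \<le> 0" if "t > 0" for t
  proof -
    have "0 \<le> (p + g (-c - t *\<^sub>R w)) \<bullet> ((-c - t *\<^sub>R w) + c)" by (rule nonneg)
    also have "\<dots> = - t * k t" by (simp add: k_def)
    finally show ?thesis using that by (simp add: mult_le_0_iff)
  qed
  then have "eventually (\<lambda>t. k t \<le> 0) (at 0 within {0<..})"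
    unfolding eventually_at_filter by (auto intro: always_eventually)
  ultimately have "k 0 \<le> 0"
    by (intro tendsto_upperbound) auto
  then have "w \<bullet> w = 0"
    using inner_ge_zero[of w] by (simp add: k_def flip: w_def)
  then show ?thesis
    by (simp add: w_def)
qed

lemma pairing_nonneg_if_monotone:
  fixes g s :: "'a::real_inner \<Rightarrow> 'a"
  assumes zeros: "\<And>\<Xi> \<tau>. \<Xi> + g \<tau> = 0 \<longleftrightarrow> \<tau> + s \<Xi> = 0" and "monotone_operator g"
  shows "0 \<le> (\<Xi> + g \<tau>) \<bullet> (\<tau> + s \<Xi>)"
proof -
  define a where "a = - s \<Xi>"
  have "\<Xi> + g a = 0" using zeros by (simp add: a_def)
  then have ga: "g a = - \<Xi>" by (simp add: add_eq_0_iff)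
  have "0 \<le> (g \<tau> - g a) \<bullet> (\<tau> - a)"
    using \<open>monotone_operator g\<close> by (simp add: monotone_operator_def)
  also have "\<dots> = (\<Xi> + g \<tau>) \<bullet> (\<tau> + s \<Xi>)"
    unfolding ga by (simp add: a_def algebra_simps)
  finally show ?thesis .
qed

lemma pairing_nonneg_iff:
  fixes g s :: "'a::real_inner \<Rightarrow> 'a"
  assumes "continuous_on UNIV g" and "continuous_on UNIV s"
  shows "(\<forall>\<Xi> \<tau>. 0 \<le> (\<Xi> + g \<tau>) \<bullet> (\<tau> + s \<Xi>)) \<longleftrightarrow>
         (\<forall>\<Xi> \<tau>. \<Xi> + g \<tau> = 0 \<longleftrightarrow> \<tau> + s \<Xi> = 0) \<and> monotone_operator g \<and> monotone_operator s"
proof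
  assume nonneg: "\<forall>\<Xi> \<tau>. 0 \<le> (\<Xi> + g \<tau>) \<bullet> (\<tau> + s \<Xi>)"
  have gs: "g (- s \<Xi>) = - \<Xi>" for \<Xi>
    using inner_nonneg_imp_zero_at[OF assms(1), of \<Xi> "s \<Xi>"] nonneg
    by (simp add: add_eq_0_iff)
  have sg: "s (- g \<tau>) = - \<tau>" for \<tau>
    using inner_nonneg_imp_zero_at[OF assms(2), of \<tau> "g \<tau>"] nonneg
    by (simp add: add_eq_0_iff inner_commute)
  have "\<Xi> + g \<tau> = 0 \<longleftrightarrow> \<tau> + s \<Xi> = 0" for \<Xi> \<tau>
    using gs[of \<Xi>] sg[of \<tau>] by (auto simp: add_eq_0_iff)
  moreover have "monotone_operator g"
  proof -
    have "0 \<le> (- g y + g x) \<bullet> (x + s (- g y))" for x y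
      using nonneg by blast
    then show ?thesis
      unfolding monotone_operator_def by (simp add: sg)
  qed
  moreover have "monotone_operator s"
  proof -
    have "0 \<le> (x + g (- s y)) \<bullet> (- s y + s x)" for x y
      using nonneg by blast
    then show ?thesis
      unfolding monotone_operator_def by (simp add: gs inner_commute)
  qed
  ultimately show "(\<forall>\<Xi> \<tau>. \<Xi> + g \<tau> = 0 \<longleftrightarrow> \<tau> + s \<Xi> = 0) \<and> monotone_operator g \<and> monotone_operator s"
    by blast
qed (blast intro: pairing_nonneg_if_monotone)

theorem lemma3p1:
  fixes G \<Sigma> :: "real^'m \<Rightarrow> real"
  assumes "C2 G" and "C2 \<Sigma>"
  shows "(\<forall>\<Xi> \<tau>. (\<Xi> + grad G \<tau>) \<bullet> (\<tau> + grad \<Sigma> \<Xi>) \<ge> 0) \<longleftrightarrow>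
         ((\<forall>\<Xi> \<tau>. \<Xi> + grad G \<tau> = 0 \<longleftrightarrow> \<tau> + grad \<Sigma> \<Xi> = 0) \<and>
          convex_on UNIV G \<and> convex_on UNIV \<Sigma>)"
proof -
  have "convex_on UNIV f \<longleftrightarrow> monotone_operator (grad f)" if "C2 f" for f :: "real^'m \<Rightarrow> real"
    using that by (intro convex_on_iff_monotone_gradient has_derivative_grad) (simp add: C2_def)
  with assms show ?thesis
    using pairing_nonneg_iff[OF C2_imp_continuous_grad C2_imp_continuous_grad] by simp
qed

end
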